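(* Let $\mu$ be a compactly supported positive Borel measure on $\mathbb{C}$. If $P^2(\mu)=L^2(\mu)$, then $\lambda(\mu,\mathbf{m}_{z_0;r})=0$ for every $z_0\in\mathbb{C}$ and every $r>0$.
   Context: $P^2(\mu)$ denotes the closure of the polynomials $\mathbb{P}[z]$ in $L^2(\mu)$. $\mathbf{m}_{z_0;r}$ is the normalized uniform Lebesgue (arc-length) probability measure on the circle $\{|z-z_0|=r\}$. For positive Borel measures $\mu_1,\mu_2$ on $\mathbb{C}$ with finite moments and $\mu_2$ infinitely supported, $\lambda(\mu_1,\mu_2)=\inf\{\int|p|^2d\mu_1/\int|p|^2d\mu_2 : p\in\mathbb{P}[z]\setminus\{0\}\}$ (equivalently, the limit of the smallest generalized eigenvalues of the $(n+1)\times(n+1)$ truncations of the moment matrix $\mathbf{M}(\mu_1)=(\int z^i\bar z^jd\mu_1)$ with respect to those of $\mathbf{M}(\mu_2)$). *)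

theory Defs
  imports "HOL-Analysis.Analysis" "HOL-Computational_Algebra.Polynomial"
begin

definition compactly_supported :: "complex measure \<Rightarrow> bool" where
  "compactly_supported \<mu> \<longleftrightarrow>
     (\<exists>K. compact K \<and> K \<in> sets \<mu> \<and> emeasure \<mu> (space \<mu> - K) = 0)"

definition P2_eq_L2 :: "complex measure \<Rightarrow> bool" where
  "P2_eq_L2 \<mu> \<longleftrightarrow>
     (\<forall>f \<in> borel_measurable \<mu>.
        (\<integral>\<^sup>+ z. ennreal ((cmod (f z))\<^sup>2) \<partial>\<mu>) < \<infinity> \<longrightarrow>
        (\<forall>e>0. \<exists>p :: complex poly.
            (\<integral>\<^sup>+ z. ennreal ((cmod (f z - poly p z))\<^sup>2) \<partial>\<mu>) < ennreal e))"

definition circle_measure :: "complex \<Rightarrow> real \<Rightarrow> complex measure" where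
  "circle_measure z0 r =
     distr (uniform_measure lborel {0..2*pi}) borel (\<lambda>t. z0 + complex_of_real r * cis t)"

definition lambda_meas :: "complex measure \<Rightarrow> complex measure \<Rightarrow> real" where
  "lambda_meas \<mu>1 \<mu>2 =
     (INF p \<in> {p :: complex poly. p \<noteq> 0}.
        (\<integral>z. (cmod (poly p z))\<^sup>2 \<partial>\<mu>1) / (\<integral>z. (cmod (poly p z))\<^sup>2 \<partial>\<mu>2))"

end

theory Submission
  imports Defs
begin

text \<open>
  Write \<open>w = z - z0\<close>. For a polynomial \<open>g\<close> with \<open>g z0 = 1\<close>, the real part of \<open>g\<close> has
  mean \<open>1\<close> on every circle around \<open>z0\<close>, so \<open>(z - z0) g\<close> has squared \<open>L\<^sup>2\<close>-norm at least \<open>r\<^sup>2\<close>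
  on the circle of radius \<open>r\<close>. On the other hand, \<open>1/w\<close> is almost in \<open>L\<^sup>2(\<mu>)\<close>: its
  regularisation \<open>f = conj w / (|w|\<^sup>2 + \<delta>\<^sup>2)\<close> is bounded, hence approximable by a
  polynomial \<open>s\<close>, and on the support of \<open>\<mu>\<close>, where \<open>|w| \<le> R\<close>, we have
  \<open>|w (1 - w s)| \<le> \<delta> + R\<^sup>2 |f - s|\<close>. Taking \<open>g = 1 - w s\<close> makes the
  Rayleigh quotient arbitrarily small.
\<close>

lemma integral_Re_cis_multiple:
  "(\<integral>t. Re (a * cis (real n * t)) * indicator {0..2*pi} t \<partial>lborel) = (if n = 0 then 2*pi * Re a else 0)"
proof (cases "n = 0")
  case False
  let ?F = "\<lambda>t. (Re a * sin (real n * t) + Im a * cos (real n * t)) / real n"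
  have "(\<integral>t. Re (a * cis (real n * t)) * indicator {0..2*pi} t \<partial>lborel) = ?F (2*pi) - ?F 0"
    using False by (intro integral_FTC_Icc_real)
      (auto intro!: derivative_eq_intros continuous_intros simp: field_simps)
  also have "\<dots> = 0"
    using cos_2npi[of n] sin_2npi[of n] by (simp add: mult_ac)
  finally show ?thesis using False by simp
qed simp

lemma poly_circle_mean_Re:
  fixes q :: "complex poly"
  shows "(\<integral>t. Re (poly q (c + of_real r * cis t)) * indicator {0..2*pi} t \<partial>lborel) = 2*pi * Re (poly q c)"
proof -
  define p where "p = pcompose q [:c, of_real r:]"
  define d where "d = degree p"
  have expand: "Re (poly q (c + of_real r * cis t)) = (\<Sum>k\<le>d. Re (coeff p k * cis (real k * t)))" for t
  proof -
    have "poly q (c + of_real r * cis t) = poly p (cis t)"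
      by (simp add: p_def poly_pcompose algebra_simps)
    also have "\<dots> = (\<Sum>k\<le>d. coeff p k * cis (real k * t))"
      by (simp add: poly_altdef d_def Complex.DeMoivre)
    finally show ?thesis by (simp add: Re_sum)
  qed
  have "(\<integral>t. Re (poly q (c + of_real r * cis t)) * indicator {0..2*pi} t \<partial>lborel)
      = (\<Sum>k\<le>d. \<integral>t. Re (coeff p k * cis (real k * t)) * indicator {0..2*pi} t \<partial>lborel)"
    unfolding expand sum_distrib_right
    by (intro Bochner_Integration.integral_sum borel_integrable_atLeastAtMost) (auto intro!: continuous_intros)
  also have "\<dots> = 2*pi * Re (coeff p 0)"
    by (simp only: integral_Re_cis_multiple) (simp add: sum.delta)
  also have "coeff p 0 = poly q c"
    by (simp add: p_def poly_0_coeff_0[symmetric] poly_pcompose)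
  finally show ?thesis .
qed

lemma integral_circle_measure:
  fixes h :: "complex \<Rightarrow> real"
  assumes "continuous_on UNIV h"
  shows "(\<integral>z. h z \<partial>circle_measure z0 r)
    = (\<integral>t. h (z0 + of_real r * cis t) * indicator {0..2*pi} t \<partial>lborel) / (2*pi)"
proof -
  have "(\<integral>z. h z \<partial>circle_measure z0 r)
      = (\<integral>t. h (z0 + of_real r * cis t) \<partial>uniform_measure lborel {0..2*pi})"
    unfolding circle_measure_def
    by (intro integral_distr borel_measurable_continuous_onI assms)
      (simp add: measurable_cong_sets[OF sets_uniform_measure refl] borel_measurable_continuous_onI
        continuous_intros)
  also have "uniform_measure lborel {0..2*pi} = density lborel (\<lambda>t. ennreal (indicator {0..2*pi} t / (2*pi)))"
    unfolding uniform_measure_def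
    by (intro density_cong) (auto simp flip: divide_ennreal split: split_indicator)
  also have "(\<integral>t. h (z0 + of_real r * cis t) \<partial>\<dots>)
      = (\<integral>t. (indicator {0..2*pi} t / (2*pi)) *\<^sub>R h (z0 + of_real r * cis t) \<partial>lborel)"
    by (intro integral_density)
      (auto intro!: borel_measurable_continuous_onI continuous_intros continuous_on_compose2[OF assms])
  finally show ?thesis by (simp add: mult.commute)
qed

lemma integral_square_ge_of_mean_one:
  fixes g :: "real \<Rightarrow> real"
  assumes cont: "\<And>t. isCont g t" and "a \<le> b"
    and mean: "(\<integral>t. g t * indicator {a..b} t \<partial>lborel) = b - a"
  shows "b - a \<le> (\<integral>t. (g t)\<^sup>2 * indicator {a..b} t \<partial>lborel)"
proof -
  have "0 \<le> (\<integral>t. (g t - 1)\<^sup>2 * indicator {a..b} t \<partial>lborel)"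
    by (intro integral_nonneg_AE) auto
  also have "\<dots> = (\<integral>t. ((g t)\<^sup>2 * indicator {a..b} t - 2 * (g t * indicator {a..b} t)) + indicator {a..b} t \<partial>lborel)"
    by (intro Bochner_Integration.integral_cong refl) (simp add: power2_eq_square algebra_simps)
  also have "\<dots> = (\<integral>t. (g t)\<^sup>2 * indicator {a..b} t \<partial>lborel) - (b - a)"
    using mean \<open>a \<le> b\<close>
    by (simp add: borel_integrable_atLeastAtMost cont)
  finally show ?thesis by simp
qed

lemma integral_circle_measure_norm_poly_sq_ge:
  fixes g :: "complex poly"
  assumes "poly g z0 = 1"
  shows "r\<^sup>2 \<le> (\<integral>z. (cmod (poly ([:-z0, 1:] * g) z))\<^sup>2 \<partial>circle_measure z0 r)"
proof -
  define G where "G t = poly g (z0 + of_real r * cis t)" for t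
  have "continuous_on UNIV G"
    unfolding G_def by (intro continuous_intros)
  then have cont_G: "isCont G t" for t
    by (simp add: continuous_on_eq_continuous_at)
  have mean: "(\<integral>t. Re (G t) * indicator {0..2*pi} t \<partial>lborel) = 2*pi"
    by (simp add: G_def poly_circle_mean_Re assms)
  have cont_Re_G: "isCont (\<lambda>t. Re (G t)) t" for t
    using cont_G by simp
  have "2*pi \<le> (\<integral>t. (Re (G t))\<^sup>2 * indicator {0..2*pi} t \<partial>lborel)"
    using integral_square_ge_of_mean_one[of "\<lambda>t. Re (G t)" 0 "2*pi"] cont_Re_G mean by simp
  also have "\<dots> \<le> (\<integral>t. (cmod (G t))\<^sup>2 * indicator {0..2*pi} t \<partial>lborel)"
    by (intro integral_mono borel_integrable_atLeastAtMost continuous_intros cont_G cont_Re_G)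
      (auto simp: indicator_def abs_Re_le_cmod intro!: power2_le_iff_abs_le[THEN iffD2])
  finally have "r\<^sup>2 * (2*pi) \<le> r\<^sup>2 * (\<integral>t. (cmod (G t))\<^sup>2 * indicator {0..2*pi} t \<partial>lborel)"
    by (rule mult_left_mono) simp
  then have "r\<^sup>2 \<le> r\<^sup>2 * (\<integral>t. (cmod (G t))\<^sup>2 * indicator {0..2*pi} t \<partial>lborel) / (2*pi)"
    by (simp add: le_divide_eq)
  also have "\<dots> = (\<integral>z. (cmod (poly ([:-z0, 1:] * g) z))\<^sup>2 \<partial>circle_measure z0 r)"
  proof -
    have "poly ([:-z0, 1:] * g) (z0 + of_real r * cis t) = of_real r * cis t * G t" for t
      by (simp add: G_def algebra_simps)
    then have "(cmod (poly ([:-z0, 1:] * g) (z0 + of_real r * cis t)))\<^sup>2 = r\<^sup>2 * (cmod (G t))\<^sup>2" for t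
      by (simp add: norm_mult power_mult_distrib)
    then show ?thesis
      by (subst integral_circle_measure) (auto intro!: continuous_intros simp: mult.assoc)
  qed
  finally show ?thesis .
qed

definition regularized_inverse :: "real \<Rightarrow> complex \<Rightarrow> complex" where
  "regularized_inverse d w = cnj w / of_real ((cmod w)\<^sup>2 + d\<^sup>2)"

lemma mult_le_sum_squares:
  fixes x y :: real
  assumes "0 \<le> x" "0 \<le> y"
  shows "x * y \<le> x\<^sup>2 + y\<^sup>2"
  using zero_le_power2[of "x - y"] mult_nonneg_nonneg[OF assms] by (simp add: power2_diff)

lemma norm_regularized_inverse_le:
  assumes "d > 0"
  shows "cmod (regularized_inverse d w) \<le> 1 / d"
proof -
  define a where "a = (cmod w)\<^sup>2 + d\<^sup>2"
  have a: "a > 0"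
    using assms by (simp add: a_def add_nonneg_pos)
  have "cmod (regularized_inverse d w) = cmod w / a"
    using a unfolding regularized_inverse_def a_def[symmetric] by (simp add: norm_divide)
  also have "\<dots> \<le> 1 / d"
    using mult_le_sum_squares[of "cmod w" d] a assms by (simp add: a_def divide_simps mult.commute)
  finally show ?thesis .
qed

lemma mult_regularized_inverse:
  "w * regularized_inverse d w = of_real ((cmod w)\<^sup>2 / ((cmod w)\<^sup>2 + d\<^sup>2))"
proof -
  have "w * regularized_inverse d w = (w * cnj w) / of_real ((cmod w)\<^sup>2 + d\<^sup>2)"
    by (simp add: regularized_inverse_def del: of_real_add of_real_power)
  also have "w * cnj w = of_real ((cmod w)\<^sup>2)"
    by (rule complex_norm_square[symmetric])
  finally show ?thesis
    by (simp del: of_real_add of_real_power)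
qed

lemma norm_mult_one_minus_regularized_inverse_le:
  assumes "d > 0"
  shows "cmod (w * (1 - w * regularized_inverse d w)) \<le> d"
proof -
  define a where "a = (cmod w)\<^sup>2 + d\<^sup>2"
  have a: "a > 0"
    using assms by (simp add: a_def add_nonneg_pos)
  have "1 - w * regularized_inverse d w = of_real (1 - (cmod w)\<^sup>2 / a)"
    by (simp add: mult_regularized_inverse a_def del: of_real_add of_real_power)
  also have "1 - (cmod w)\<^sup>2 / a = d\<^sup>2 / a"
    using a by (simp add: field_simps) (simp add: a_def)
  finally have "cmod (w * (1 - w * regularized_inverse d w)) = cmod w * d * d / a"
    using a by (simp only: norm_mult norm_of_real) (simp add: power2_eq_square)
  also have "\<dots> \<le> a * d / a"
    using mult_le_sum_squares[of "cmod w" d] assms a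
    by (intro divide_right_mono mult_right_mono) (auto simp: a_def)
  finally show ?thesis
    using a by simp
qed

lemma norm_mult_one_minus_mult_sq_le:
  assumes "d > 0" "cmod w \<le> R"
  shows "(cmod (w * (1 - w * s)))\<^sup>2 \<le> 2 * d\<^sup>2 + 2 * R^4 * (cmod (regularized_inverse d w - s))\<^sup>2"
proof -
  define f where "f = regularized_inverse d w"
  have "w * (1 - w * s) = w * (1 - w * f) + w\<^sup>2 * (f - s)"
    by (simp add: algebra_simps power2_eq_square)
  also have "cmod \<dots> \<le> d + R\<^sup>2 * cmod (f - s)"
  proof (rule norm_triangle_le[OF add_mono])
    show "cmod (w * (1 - w * f)) \<le> d"
      unfolding f_def by (rule norm_mult_one_minus_regularized_inverse_le[OF assms(1)])
    show "cmod (w\<^sup>2 * (f - s)) \<le> R\<^sup>2 * cmod (f - s)"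
      using assms(2) by (simp add: norm_mult norm_power mult_right_mono power_mono)
  qed
  finally have "(cmod (w * (1 - w * s)))\<^sup>2 \<le> (d + R\<^sup>2 * cmod (f - s))\<^sup>2"
    by (intro power_mono) auto
  also have "\<dots> \<le> 2 * d\<^sup>2 + 2 * (R\<^sup>2 * cmod (f - s))\<^sup>2"
    using zero_le_power2[of "d - R\<^sup>2 * cmod (f - s)"] by (simp add: power2_sum power2_diff)
  finally show ?thesis
    by (simp add: f_def power_mult_distrib flip: power_mult)
qed

lemma compactly_supported_AE_norm_le:
  assumes "compactly_supported \<mu>"
  shows "\<exists>R. AE z in \<mu>. cmod (z - z0) \<le> R"
proof -
  obtain K where K: "compact K" "K \<in> sets \<mu>" "emeasure \<mu> (space \<mu> - K) = 0"
    using assms unfolding compactly_supported_def by blast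
  obtain b where b: "\<forall>z\<in>K. cmod z \<le> b"
    using compact_imp_bounded[OF K(1)] unfolding bounded_iff by blast
  have "AE z in \<mu>. cmod (z - z0) \<le> b + cmod z0"
  proof (rule AE_I[of _ _ "space \<mu> - K"])
    show "{z \<in> space \<mu>. \<not> cmod (z - z0) \<le> b + cmod z0} \<subseteq> space \<mu> - K"
      using b by (fastforce intro: order_trans[OF norm_triangle_ineq4])
  qed (use K in auto)
  then show ?thesis ..
qed

lemma P2_eq_L2_approx_bounded:
  fixes \<mu> :: "complex measure"
  assumes sets: "sets \<mu> = sets borel" and "finite_measure \<mu>" "P2_eq_L2 \<mu>"
    and "f \<in> borel_measurable \<mu>" "\<And>z. cmod (f z) \<le> B" "\<eta> > 0"
  obtains s where "integrable \<mu> (\<lambda>z. (cmod (f z - poly s z))\<^sup>2)"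
    and "(\<integral>z. (cmod (f z - poly s z))\<^sup>2 \<partial>\<mu>) \<le> \<eta>"
proof -
  interpret finite_measure \<mu> by fact
  have "(\<integral>\<^sup>+ z. ennreal ((cmod (f z))\<^sup>2) \<partial>\<mu>) \<le> (\<integral>\<^sup>+ z. ennreal (B\<^sup>2) \<partial>\<mu>)"
    using assms(5) by (intro nn_integral_mono ennreal_leI power_mono) auto
  also have "\<dots> < \<infinity>"
    by (simp add: ennreal_mult_less_top) (metis emeasure_finite top.not_eq_extremum)
  finally obtain s where s: "(\<integral>\<^sup>+ z. ennreal ((cmod (f z - poly s z))\<^sup>2) \<partial>\<mu>) < ennreal \<eta>"
    using assms(3,4,6) unfolding P2_eq_L2_def by blast
  have "(\<lambda>z. poly s z) \<in> borel_measurable \<mu>"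
    unfolding measurable_cong_sets[OF sets refl] by (intro borel_measurable_continuous_onI continuous_intros)
  then have meas: "(\<lambda>z. (cmod (f z - poly s z))\<^sup>2) \<in> borel_measurable \<mu>"
    using assms(4) by measurable
  show ?thesis
  proof
    show int: "integrable \<mu> (\<lambda>z. (cmod (f z - poly s z))\<^sup>2)"
      using meas s by (simp add: integrable_iff_bounded) (metis ennreal_less_top order.strict_trans)
    have "(\<integral>z. (cmod (f z - poly s z))\<^sup>2 \<partial>\<mu>) = enn2real (\<integral>\<^sup>+ z. ennreal ((cmod (f z - poly s z))\<^sup>2) \<partial>\<mu>)"
      by (rule integral_eq_nn_integral[OF meas]) simp
    also have "\<dots> \<le> \<eta>"
      using s assms(6) by (metis enn2real_ennreal enn2real_mono less_imp_le ennreal_less_top less_le)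
    finally show "(\<integral>z. (cmod (f z - poly s z))\<^sup>2 \<partial>\<mu>) \<le> \<eta>" .
  qed
qed

lemma integral_norm_mult_one_minus_mult_sq_le:
  fixes \<mu> :: "complex measure" and s :: "complex poly"
  assumes sets: "sets \<mu> = sets borel" and "finite_measure \<mu>" "d > 0"
    and R: "AE z in \<mu>. cmod (z - z0) \<le> R"
    and int: "integrable \<mu> (\<lambda>z. (cmod (regularized_inverse d (z - z0) - poly s z))\<^sup>2)"
  shows "(\<integral>z. (cmod ((z - z0) * (1 - (z - z0) * poly s z)))\<^sup>2 \<partial>\<mu>)
    \<le> 2 * measure \<mu> (space \<mu>) * d\<^sup>2 + 2 * R^4 * (\<integral>z. (cmod (regularized_inverse d (z - z0) - poly s z))\<^sup>2 \<partial>\<mu>)"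
proof -
  interpret finite_measure \<mu> by fact
  define P where "P z = (cmod ((z - z0) * (1 - (z - z0) * poly s z)))\<^sup>2" for z
  define B where "B z = 2 * d\<^sup>2 + 2 * R^4 * (cmod (regularized_inverse d (z - z0) - poly s z))\<^sup>2" for z
  have P_le: "AE z in \<mu>. P z \<le> B z"
    using R by eventually_elim (simp add: P_def B_def norm_mult_one_minus_mult_sq_le[OF \<open>d > 0\<close>])
  have B_int: "integrable \<mu> B"
    unfolding B_def using int by simp
  have "P \<in> borel_measurable \<mu>"
    unfolding P_def measurable_cong_sets[OF sets refl]
    by (intro borel_measurable_continuous_onI continuous_intros)
  then have "integrable \<mu> P"
    by (rule Bochner_Integration.integrable_bound[OF B_int])
      (use P_le in \<open>eventually_elim, simp add: P_def\<close>)
  then have "integral\<^sup>L \<mu> P \<le> integral\<^sup>L \<mu> B"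
    using B_int P_le by (rule integral_mono_AE)
  also have "\<dots> = 2 * measure \<mu> (space \<mu>) * d\<^sup>2
      + 2 * R^4 * (\<integral>z. (cmod (regularized_inverse d (z - z0) - poly s z))\<^sup>2 \<partial>\<mu>)"
    unfolding B_def using int by simp
  finally show ?thesis
    unfolding P_def .
qed

lemma twice_mult_divide_four_add_one_le:
  fixes x c :: real
  assumes "0 \<le> x" "0 \<le> c"
  shows "2 * x * (c / (4 * (x + 1))) \<le> c / 2"
  using assms by (simp add: field_simps mult_left_mono)

lemma P2_eq_L2_ex_small_poly:
  fixes \<mu> :: "complex measure"
  assumes sets: "sets \<mu> = sets borel" and fin: "finite_measure \<mu>"
    and supp: "compactly_supported \<mu>" and P2: "P2_eq_L2 \<mu>" and "\<epsilon> > 0"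
  shows "\<exists>g. poly g z0 = 1 \<and> (\<integral>z. (cmod (poly ([:-z0, 1:] * g) z))\<^sup>2 \<partial>\<mu>) \<le> \<epsilon>"
proof -
  obtain R where R: "AE z in \<mu>. cmod (z - z0) \<le> R"
    using compactly_supported_AE_norm_le[OF supp] by blast
  define M where "M = measure \<mu> (space \<mu>)"
  define d where "d = sqrt (\<epsilon> / (4 * (M + 1)))"
  define \<eta> where "\<eta> = \<epsilon> / (4 * (R^4 + 1))"
  define f where "f z = regularized_inverse d (z - z0)" for z
  have M: "M \<ge> 0"
    by (simp add: M_def)
  have d: "d > 0" "d\<^sup>2 = \<epsilon> / (4 * (M + 1))"
    using \<open>\<epsilon> > 0\<close> M by (simp_all add: d_def)
  have R4: "R^4 \<ge> 0"
    by (simp add: zero_le_even_power)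
  have \<eta>: "\<eta> > 0"
    using \<open>\<epsilon> > 0\<close> R4 by (simp add: \<eta>_def add_nonneg_pos)
  have "(cmod w)\<^sup>2 + d\<^sup>2 \<noteq> 0" for w
    using d(1) by (simp add: add_nonneg_pos)
  then have "continuous_on UNIV f"
    unfolding f_def regularized_inverse_def by (intro continuous_intros) (simp del: of_real_add of_real_power)
  then have "f \<in> borel_measurable \<mu>"
    unfolding measurable_cong_sets[OF sets refl] by (rule borel_measurable_continuous_onI)
  moreover have "cmod (f z) \<le> 1 / d" for z
    unfolding f_def by (rule norm_regularized_inverse_le[OF d(1)])
  ultimately obtain s where s_int: "integrable \<mu> (\<lambda>z. (cmod (f z - poly s z))\<^sup>2)"
    and s_le: "(\<integral>z. (cmod (f z - poly s z))\<^sup>2 \<partial>\<mu>) \<le> \<eta>"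
    using P2_eq_L2_approx_bounded[OF sets fin P2 _ _ \<eta>] by blast
  define g where "g = 1 - [:-z0, 1:] * s"
  have "poly ([:-z0, 1:] * g) z = (z - z0) * (1 - (z - z0) * poly s z)" for z
    by (simp add: g_def algebra_simps)
  then have "(\<integral>z. (cmod (poly ([:-z0, 1:] * g) z))\<^sup>2 \<partial>\<mu>)
      \<le> 2 * M * d\<^sup>2 + 2 * R^4 * (\<integral>z. (cmod (f z - poly s z))\<^sup>2 \<partial>\<mu>)"
    using integral_norm_mult_one_minus_mult_sq_le[OF sets fin d(1) R] s_int
    by (simp add: M_def f_def)
  also have "\<dots> \<le> 2 * M * d\<^sup>2 + 2 * R^4 * \<eta>"
    using s_le R4 by (intro add_left_mono mult_left_mono) auto
  also have "\<dots> \<le> \<epsilon>"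
    using twice_mult_divide_four_add_one_le[OF M, of \<epsilon>] twice_mult_divide_four_add_one_le[OF R4, of \<epsilon>]
      \<open>\<epsilon> > 0\<close>
    by (simp add: d(2) \<eta>_def)
  finally have "(\<integral>z. (cmod (poly ([:-z0, 1:] * g) z))\<^sup>2 \<partial>\<mu>) \<le> \<epsilon>" .
  moreover have "poly g z0 = 1"
    by (simp add: g_def)
  ultimately show ?thesis
    by blast
qed

lemma cINF_eq_0I:
  fixes Q :: "'a \<Rightarrow> real"
  assumes nonneg: "\<And>x. x \<in> S \<Longrightarrow> 0 \<le> Q x" and small: "\<And>\<epsilon>. \<epsilon> > 0 \<Longrightarrow> \<exists>x\<in>S. Q x \<le> \<epsilon>"
  shows "(INF x\<in>S. Q x) = 0"
proof (rule antisym)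
  have bdd: "bdd_below (Q ` S)"
    using nonneg by (intro bdd_belowI[of _ 0]) auto
  show "(INF x\<in>S. Q x) \<le> 0"
  proof (rule field_le_epsilon)
    fix \<epsilon> :: real
    assume "\<epsilon> > 0"
    then obtain x where "x \<in> S" "Q x \<le> \<epsilon>"
      using small by blast
    then show "(INF x\<in>S. Q x) \<le> 0 + \<epsilon>"
      using cINF_lower[OF bdd] by fastforce
  qed
  have "S \<noteq> {}"
    using small[of 1] by auto
  then show "0 \<le> (INF x\<in>S. Q x)"
    by (rule cINF_greatest) (rule nonneg)
qed

lemma P2_eq_L2_ex_small_circle_quotient:
  fixes \<mu> :: "complex measure"
  assumes "sets \<mu> = sets borel" "finite_measure \<mu>" "compactly_supported \<mu>" "P2_eq_L2 \<mu>"
    and "r > 0" "\<epsilon> > 0"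
  shows "\<exists>p. p \<noteq> 0 \<and> (\<integral>z. (cmod (poly p z))\<^sup>2 \<partial>\<mu>)
    / (\<integral>z. (cmod (poly p z))\<^sup>2 \<partial>circle_measure z0 r) \<le> \<epsilon>"
proof -
  obtain g where g: "poly g z0 = 1"
    and small: "(\<integral>z. (cmod (poly ([:-z0, 1:] * g) z))\<^sup>2 \<partial>\<mu>) \<le> \<epsilon> * r\<^sup>2"
    using P2_eq_L2_ex_small_poly[OF assms(1-4), of "\<epsilon> * r\<^sup>2" z0] assms(5,6) by auto
  define C where "C = (\<integral>z. (cmod (poly ([:-z0, 1:] * g) z))\<^sup>2 \<partial>circle_measure z0 r)"
  have large: "r\<^sup>2 \<le> C"
    unfolding C_def using g by (rule integral_circle_measure_norm_poly_sq_ge)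
  then have "C > 0"
    using \<open>r > 0\<close> by (smt (verit) zero_less_power2)
  have "[:-z0, 1:] * g \<noteq> 0"
  proof
    assume zero: "[:-z0, 1:] * g = 0"
    from \<open>C > 0\<close> show False
      unfolding C_def zero by simp
  qed
  moreover have "(\<integral>z. (cmod (poly ([:-z0, 1:] * g) z))\<^sup>2 \<partial>\<mu>) / C \<le> \<epsilon>"
    using \<open>C > 0\<close> order_trans[OF small mult_left_mono[OF large]] \<open>\<epsilon> > 0\<close>
    by (simp add: pos_divide_le_eq)
  ultimately show ?thesis
    unfolding C_def by blast
qed

theorem theorem3:
  fixes \<mu> :: "complex measure"
  assumes "sets \<mu> = sets borel"
    and "finite_measure \<mu>"
    and "compactly_supported \<mu>"
    and "P2_eq_L2 \<mu>"
  shows "\<forall>z0 :: complex. \<forall>r :: real. r > 0 \<longrightarrow> lambda_meas \<mu> (circle_measure z0 r) = 0"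
proof (intro allI impI)
  fix z0 :: complex and r :: real
  assume "r > 0"
  show "lambda_meas \<mu> (circle_measure z0 r) = 0"
    unfolding lambda_meas_def
  proof (rule cINF_eq_0I)
    show "\<exists>p\<in>{p. p \<noteq> 0}. (\<integral>z. (cmod (poly p z))\<^sup>2 \<partial>\<mu>)
        / (\<integral>z. (cmod (poly p z))\<^sup>2 \<partial>circle_measure z0 r) \<le> \<epsilon>" if "\<epsilon> > 0" for \<epsilon>
      using P2_eq_L2_ex_small_circle_quotient[OF assms \<open>r > 0\<close> that] by auto
  qed (intro divide_nonneg_nonneg Bochner_Integration.integral_nonneg; simp)
qed

end
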